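(* Let $A\in\mathbb{R}_{\max}^{n\times n}$ with $\lambda(A)=0$, let $g=g(\mathrm{crit}(A))$, assume $T_1(A)=\mathrm{DM}(g,n)$ and that $\mathrm{crit}(A)$ contains, up to choice of first node, a unique cycle $Z_0$ of length $g$. Then in any interesting walk each node of $Z_0$ occurs exactly $g$ times and each node not in $Z_0$ occurs exactly $g+1$ times.
   Context: Max-plus semiring $\mathbb{R}_{\max}=\mathbb{R}\cup\{-\infty\}$ with $a\oplus b=\max(a,b)$, $a\otimes b=a+b$; $(AB)_{ij}=\max_k(a_{ik}+b_{kj})$; $A^t$ is the $t$-th max-plus power, $A^0=I$. $\mathcal{D}(A)$ is the digraph on $\{1,\dots,n\}$ with arc $(i,j)$ of weight $a_{ij}$ whenever $a_{ij}\ne-\infty$. A walk is a node sequence whose consecutive pairs are arcs, its length is its number of arcs and its weight the sum of its arc weights; cycles are closed walks with no proper closed subwalk. $\lambda(A)$ is the maximal cycle mean. $\mathrm{crit}(A)$ is the subgraph of all nodes and arcs of cycles attaining $\lambda(A)$; its nodes are critical. $g(\mathrm{crit}(A))$ is the maximum over strongly connected components of $\mathrm{crit}(A)$ of their minimal cycle length. The cyclicity of $\mathrm{crit}(A)$ is the lcm over components of the gcd of their cycle lengths. CSR terms: with $\gamma$ the cyclicity of $\mathrm{crit}(A)$ and $\lambda(A)=0$, $M=I\oplus N\oplus\dots\oplus N^{n-1}$ where $N=A^\gamma$: $c_{ij}=m_{ij}$ if $j$ critical, else $-\infty$; $r_{ij}=m_{ij}$ if $i$ critical, else $-\infty$; $s_{ij}=a_{ij}$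 if $(i,j)$ is an arc of $\mathrm{crit}(A)$, else $-\infty$; $CS^tR[A]$ is the product $CS^tR$. $B_N$ has $(B_N)_{ij}=-\infty$ if $i$ or $j$ is critical and $a_{ij}$ otherwise. $T_1(A)$ is the least $T\ge0$ with $A^t=CS^tR[A]\oplus B_N^t$ for all $t\ge T$. $\mathrm{DM}(g,n)=g(n-2)+n$. Twice optimal / interesting walks: a walk $W$ from $i$ to $j$ passing through at least one node of $Z_0$ is twice optimal if it has maximal weight among all walks from $i$ to $j$ passing through a node of $Z_0$ whose length is congruent to the length of $W$ modulo $g$, and has minimal length among all such walks of maximal weight. It is interesting if it is twice optimal and has length $\mathrm{DM}(g,n)+g-1$. *)

theory Defs
  imports "HOL-Library.Extended_Real"
begin

text \<open>Max-plus matrices of size n are functions nat => nat => ereal, only entries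
with indices < n are relevant (nodes are 0..n-1). The value -infinity is the
max-plus zero; +infinity never occurs (assumed in the theorem).\<close>

type_synonym mpmat = "nat \<Rightarrow> nat \<Rightarrow> ereal"

definition mp_mult :: "nat \<Rightarrow> mpmat \<Rightarrow> mpmat \<Rightarrow> mpmat" where
  "mp_mult n X Y = (\<lambda>i j. SUP k\<in>{..<n}. X i k + Y k j)"

definition mp_id :: mpmat where
  "mp_id = (\<lambda>i j. if i = j then 0 else -\<infinity>)"

fun mp_pow :: "nat \<Rightarrow> mpmat \<Rightarrow> nat \<Rightarrow> mpmat" where
  "mp_pow n X 0 = mp_id"
| "mp_pow n X (Suc t) = mp_mult n (mp_pow n X t) X"

definition mp_add :: "mpmat \<Rightarrow> mpmat \<Rightarrow> mpmat" where
  "mp_add X Y = (\<lambda>i j. max (X i j) (Y i j))"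

definition warcs :: "nat list \<Rightarrow> (nat \<times> nat) list" where
  "warcs w = zip w (tl w)"

definition wlen :: "nat list \<Rightarrow> nat" where
  "wlen w = length w - 1"

definition wweight :: "mpmat \<Rightarrow> nat list \<Rightarrow> ereal" where
  "wweight A w = sum_list (map (\<lambda>(i,j). A i j) (warcs w))"

definition is_walk :: "nat \<Rightarrow> mpmat \<Rightarrow> nat list \<Rightarrow> bool" where
  "is_walk n A w \<longleftrightarrow> w \<noteq> [] \<and> set w \<subseteq> {..<n} \<and> (\<forall>(i,j)\<in>set (warcs w). A i j \<noteq> -\<infinity>)"

text \<open>Cycle: closed walk of positive length with no proper closed subwalk,
i.e. all nodes except the repeated first/last one are distinct.\<close>

definition is_cycle :: "nat \<Rightarrow> mpmat \<Rightarrow> nat list \<Rightarrow> bool" where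
  "is_cycle n A c \<longleftrightarrow> is_walk n A c \<and> length c \<ge> 2 \<and> hd c = last c \<and> distinct (butlast c)"

definition cmean :: "mpmat \<Rightarrow> nat list \<Rightarrow> ereal" where
  "cmean A c = wweight A c / ereal (real (wlen c))"

definition mcm :: "nat \<Rightarrow> mpmat \<Rightarrow> ereal" where
  "mcm n A = (SUP c\<in>{c. is_cycle n A c}. cmean A c)"

definition crit_cycle :: "nat \<Rightarrow> mpmat \<Rightarrow> nat list \<Rightarrow> bool" where
  "crit_cycle n A c \<longleftrightarrow> is_cycle n A c \<and> cmean A c = mcm n A"

definition crit_arcs :: "nat \<Rightarrow> mpmat \<Rightarrow> (nat \<times> nat) set" where
  "crit_arcs n A = (\<Union>c\<in>{c. crit_cycle n A c}. set (warcs c))"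

definition crit_nodes :: "nat \<Rightarrow> mpmat \<Rightarrow> nat set" where
  "crit_nodes n A = (\<Union>c\<in>{c. crit_cycle n A c}. set c)"

definition crit_walk :: "nat \<Rightarrow> mpmat \<Rightarrow> nat list \<Rightarrow> bool" where
  "crit_walk n A w \<longleftrightarrow> is_walk n A w \<and> set w \<subseteq> crit_nodes n A \<and> set (warcs w) \<subseteq> crit_arcs n A"

definition crit_graph_cycle :: "nat \<Rightarrow> mpmat \<Rightarrow> nat list \<Rightarrow> bool" where
  "crit_graph_cycle n A c \<longleftrightarrow> is_cycle n A c \<and> set (warcs c) \<subseteq> crit_arcs n A"

definition crit_reach :: "nat \<Rightarrow> mpmat \<Rightarrow> nat \<Rightarrow> nat \<Rightarrow> bool" where
  "crit_reach n A i j \<longleftrightarrow> (\<exists>w. crit_walk n A w \<and> hd w = i \<and> last w = j)"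

definition crit_comp :: "nat \<Rightarrow> mpmat \<Rightarrow> nat \<Rightarrow> nat set" where
  "crit_comp n A i = {j \<in> crit_nodes n A. crit_reach n A i j \<and> crit_reach n A j i}"

definition crit_comps :: "nat \<Rightarrow> mpmat \<Rightarrow> nat set set" where
  "crit_comps n A = crit_comp n A ` crit_nodes n A"

definition comp_cycle_lengths :: "nat \<Rightarrow> mpmat \<Rightarrow> nat set \<Rightarrow> nat set" where
  "comp_cycle_lengths n A C = {wlen c | c. crit_graph_cycle n A c \<and> set c \<subseteq> C}"

definition g_crit :: "nat \<Rightarrow> mpmat \<Rightarrow> nat" where
  "g_crit n A = Max ((\<lambda>C. Min (comp_cycle_lengths n A C)) ` crit_comps n A)"

definition cyclicity :: "nat \<Rightarrow> mpmat \<Rightarrow> nat" where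
  "cyclicity n A = Lcm ((\<lambda>C. Gcd (comp_cycle_lengths n A C)) ` crit_comps n A)"

definition M_mat :: "nat \<Rightarrow> mpmat \<Rightarrow> mpmat" where
  "M_mat n A = (\<lambda>i j. SUP k\<in>{..<n}. mp_pow n (mp_pow n A (cyclicity n A)) k i j)"

definition C_mat :: "nat \<Rightarrow> mpmat \<Rightarrow> mpmat" where
  "C_mat n A = (\<lambda>i j. if j \<in> crit_nodes n A then M_mat n A i j else -\<infinity>)"

definition R_mat :: "nat \<Rightarrow> mpmat \<Rightarrow> mpmat" where
  "R_mat n A = (\<lambda>i j. if i \<in> crit_nodes n A then M_mat n A i j else -\<infinity>)"

definition S_mat :: "nat \<Rightarrow> mpmat \<Rightarrow> mpmat" where
  "S_mat n A = (\<lambda>i j. if (i,j) \<in> crit_arcs n A then A i j else -\<infinity>)"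

definition CSR :: "nat \<Rightarrow> mpmat \<Rightarrow> nat \<Rightarrow> mpmat" where
  "CSR n A t = mp_mult n (mp_mult n (C_mat n A) (mp_pow n (S_mat n A) t)) (R_mat n A)"

definition B_N :: "nat \<Rightarrow> mpmat \<Rightarrow> mpmat" where
  "B_N n A = (\<lambda>i j. if i \<in> crit_nodes n A \<or> j \<in> crit_nodes n A then -\<infinity> else A i j)"

definition T1_property :: "nat \<Rightarrow> mpmat \<Rightarrow> nat \<Rightarrow> bool" where
  "T1_property n A T \<longleftrightarrow> (\<forall>t\<ge>T. \<forall>i<n. \<forall>j<n.
      mp_pow n A t i j = mp_add (CSR n A t) (mp_pow n (B_N n A) t) i j)"

definition is_T1 :: "nat \<Rightarrow> mpmat \<Rightarrow> nat \<Rightarrow> bool" where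
  "is_T1 n A T \<longleftrightarrow> T1_property n A T \<and> (\<forall>T'. T1_property n A T' \<longrightarrow> T \<le> T')"

definition DM :: "nat \<Rightarrow> nat \<Rightarrow> int" where
  "DM g n = int g * (int n - 2) + int n"

definition comparable_walk :: "nat \<Rightarrow> mpmat \<Rightarrow> nat list \<Rightarrow> nat \<Rightarrow> nat list \<Rightarrow> nat list \<Rightarrow> bool" where
  "comparable_walk n A Z0 g W V \<longleftrightarrow> is_walk n A V \<and> hd V = hd W \<and> last V = last W
      \<and> set V \<inter> set Z0 \<noteq> {} \<and> wlen V mod g = wlen W mod g"

definition twice_optimal :: "nat \<Rightarrow> mpmat \<Rightarrow> nat list \<Rightarrow> nat \<Rightarrow> nat list \<Rightarrow> bool" where
  "twice_optimal n A Z0 g W \<longleftrightarrow> is_walk n A W \<and> set W \<inter> set Z0 \<noteq> {}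
     \<and> (\<forall>V. comparable_walk n A Z0 g W V \<longrightarrow> wweight A V \<le> wweight A W)
     \<and> (\<forall>V. comparable_walk n A Z0 g W V \<and> wweight A V = wweight A W \<longrightarrow> wlen W \<le> wlen V)"

definition interesting :: "nat \<Rightarrow> mpmat \<Rightarrow> nat list \<Rightarrow> nat \<Rightarrow> nat list \<Rightarrow> bool" where
  "interesting n A Z0 g W \<longleftrightarrow> twice_optimal n A Z0 g W \<and> int (wlen W) = DM g n + int g - 1"

end

theory Submission
  imports Defs "HOL-Library.Multiset"
begin

text \<open>An interesting walk has length (g+1)(n-1), so it visits g*g + (g+1)(n-g) nodes, counted with
multiplicity. Twice optimality caps the visits: if a node v occurs k+1 times, the walk contains k
consecutive closed subwalks at v, and among any g of them some nonempty subfamily has total length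
divisible by g (pigeonhole on prefix sums). These closed walks have nonpositive weight since
lambda(A) = 0, so deleting them gives a walk that is at least as heavy, has the same length modulo g
and is strictly shorter; this is impossible as long as the shortened walk still meets Z0. Hence nodes
of Z0 occur at most g times and all other nodes at most g+1 times, and since these caps already sum to
the length of the walk, all of them are attained.\<close>

lemma warcs_append: "warcs (xs @ x # ys) = warcs (xs @ [x]) @ warcs (x # ys)"
proof (induction xs)
  case Nil then show ?case by (simp add: warcs_def)
next
  case (Cons a xs) then show ?case by (cases xs) (auto simp: warcs_def)
qed

lemma wlen_append: "wlen (xs @ x # ys) = wlen (xs @ [x]) + wlen (x # ys)"
  by (simp add: wlen_def)

lemma wweight_append: "wweight A (xs @ x # ys) = wweight A (xs @ [x]) + wweight A (x # ys)"
  unfolding wweight_def warcs_append[of xs x ys] by simp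

lemma is_walk_append_iff:
  "is_walk n A (xs @ x # ys) \<longleftrightarrow> is_walk n A (xs @ [x]) \<and> is_walk n A (x # ys)"
  unfolding is_walk_def warcs_append[of xs x ys] by auto

text \<open>Each s in segs contributes the closed subwalk v # s @ [v].\<close>

definition splice_loops :: "nat list \<Rightarrow> nat \<Rightarrow> nat list list \<Rightarrow> nat list \<Rightarrow> nat list" where
  "splice_loops xs v segs ys = xs @ concat (map (Cons v) segs) @ v # ys"

lemma splice_loops_Cons: "splice_loops xs v (s # segs) ys = splice_loops (xs @ v # s) v segs ys"
  by (simp add: splice_loops_def)

lemma splice_loops_additive:
  fixes F :: "nat list \<Rightarrow> 'b::comm_monoid_add"
  assumes F_append: "\<And>xs x ys. F (xs @ x # ys) = F (xs @ [x]) + F (x # ys)"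
  shows "F (splice_loops xs v segs ys) = F (xs @ [v]) + (\<Sum>s\<leftarrow>segs. F (v # s @ [v])) + F (v # ys)"
proof (induction segs arbitrary: xs)
  case Nil then show ?case using F_append[of xs v ys] by (simp add: splice_loops_def)
next
  case (Cons s segs)
  have "F ((xs @ v # s) @ [v]) = F (xs @ [v]) + F (v # s @ [v])"
    using F_append[of xs v "s @ [v]"] by simp
  then show ?case by (simp add: splice_loops_Cons Cons.IH add_ac)
qed

lemma is_walk_splice_loops_iff:
  "is_walk n A (splice_loops xs v segs ys) \<longleftrightarrow>
     is_walk n A (xs @ [v]) \<and> (\<forall>s\<in>set segs. is_walk n A (v # s @ [v])) \<and> is_walk n A (v # ys)"
proof (induction segs arbitrary: xs)
  case Nil then show ?case using is_walk_append_iff[of n A xs v ys] by (simp add: splice_loops_def)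
next
  case (Cons s segs)
  have "is_walk n A ((xs @ v # s) @ [v]) \<longleftrightarrow> is_walk n A (xs @ [v]) \<and> is_walk n A (v # s @ [v])"
    using is_walk_append_iff[of n A xs v "s @ [v]"] by simp
  then show ?case by (auto simp: splice_loops_Cons Cons.IH)
qed

lemma hd_splice_loops: "hd (splice_loops xs v segs ys) = hd (xs @ [v])"
  by (cases xs; cases segs) (auto simp: splice_loops_def)

lemma last_splice_loops: "last (splice_loops xs v segs ys) = last (v # ys)"
  by (simp add: splice_loops_def)

lemma splice_loops_if_count_list:
  assumes "Suc m \<le> count_list W v"
  shows "\<exists>xs segs ys. W = splice_loops xs v segs ys \<and> length segs = m"
  using assms
proof (induction m arbitrary: W)
  case 0
  then have "v \<in> set W" by (metis count_list_0_iff not_less_eq_eq zero_le)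
  then obtain xs ys where "W = xs @ v # ys" by (meson split_list)
  then show ?case by (intro exI[of _ xs] exI[of _ "[]"] exI[of _ ys]) (simp add: splice_loops_def)
next
  case (Suc m)
  then have "v \<in> set W" by (metis count_list_0_iff not_less_eq_eq zero_le)
  then obtain xs rest where W: "W = xs @ v # rest" "v \<notin> set xs" by (meson split_list_first)
  then have "Suc m \<le> count_list rest v" using Suc.prems by (simp add: count_list_0_iff)
  then obtain xs' segs ys where "rest = splice_loops xs' v segs ys" "length segs = m"
    using Suc.IH by blast
  then show ?case using W
    by (intro exI[of _ xs] exI[of _ "xs' # segs"] exI[of _ ys]) (simp add: splice_loops_def)
qed

lemma card_set_cycle:
  assumes "is_cycle n A c"
  shows "card (set c) = wlen c"
proof -
  from assms have l2: "2 \<le> length c" and hl: "hd c = last c" and di: "distinct (butlast c)"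
    by (auto simp: is_cycle_def)
  have c: "c = butlast c @ [last c]" and ne: "butlast c \<noteq> []"
    using l2 by (cases c; auto)+
  then have "last c \<in> set (butlast c)" using hl by (metis hd_append hd_in_set)
  then have "set c = set (butlast c)" by (subst c) auto
  then show ?thesis using di by (simp add: distinct_card wlen_def)
qed

lemma cycle_weight_nonpos:
  assumes "mcm n A = 0" and "is_cycle n A c"
  shows "wweight A c \<le> 0"
proof -
  have "cmean A c \<le> mcm n A" unfolding mcm_def using assms(2) by (intro SUP_upper) simp
  then have le: "wweight A c / ereal (real (wlen c)) \<le> 0" using assms(1) by (simp add: cmean_def)
  have "0 < ereal (real (wlen c))" using assms(2) by (simp add: is_cycle_def wlen_def)
  then have "wweight A c \<le> ereal (real (wlen c)) * 0"
    using le ereal_divide_le_pos[of "ereal (real (wlen c))"] by simp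
  then show ?thesis by simp
qed

lemma closed_walk_weight_nonpos:
  assumes lam: "mcm n A = 0"
  shows "is_walk n A c \<Longrightarrow> 2 \<le> length c \<Longrightarrow> hd c = last c \<Longrightarrow> wweight A c \<le> 0"
proof (induction "length c" arbitrary: c rule: less_induct)
  case less
  show ?case
  proof (cases "distinct (butlast c)")
    case True
    then show ?thesis using cycle_weight_nonpos[OF lam] less.prems by (simp add: is_cycle_def)
  next
    case False
    then obtain xs x ys zs where "butlast c = xs @ [x] @ ys @ [x] @ zs"
      by (metis not_distinct_decomp)
    moreover have "c = butlast c @ [last c]" using less.prems(2) by (cases c) auto
    ultimately obtain l where c: "c = xs @ x # ys @ x # zs @ [l]" by (metis append.assoc append_Cons append_Nil)
    define inner where "inner = x # ys @ [x]"
    define outer where "outer = xs @ x # zs @ [l]"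
    have weight: "wweight A c = wweight A outer + wweight A inner"
    proof -
      have "wweight A c = wweight A (xs @ [x]) + (wweight A inner + wweight A (x # zs @ [l]))"
        unfolding c inner_def
        using wweight_append[of A xs x "ys @ x # zs @ [l]"] wweight_append[of A "x # ys" x "zs @ [l]"]
        by simp
      moreover have "wweight A outer = wweight A (xs @ [x]) + wweight A (x # zs @ [l])"
        unfolding outer_def by (rule wweight_append)
      ultimately show ?thesis by (simp add: add_ac)
    qed
    have "is_walk n A (xs @ x # ys @ x # zs @ [l])" using less.prems(1) unfolding c .
    then have "is_walk n A (xs @ [x]) \<and> is_walk n A ((x # ys) @ x # zs @ [l])"
      using is_walk_append_iff[of n A xs x "ys @ x # zs @ [l]"] by simp
    then have walk: "is_walk n A outer \<and> is_walk n A inner"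
      unfolding outer_def inner_def
      using is_walk_append_iff[of n A "x # ys" x "zs @ [l]"] is_walk_append_iff[of n A xs x "zs @ [l]"]
      by simp
    have "wweight A outer \<le> 0"
      by (rule less.hyps) (use walk less.prems(3) in \<open>auto simp: outer_def c hd_append\<close>)
    moreover have "wweight A inner \<le> 0"
      by (rule less.hyps) (use walk in \<open>auto simp: inner_def c\<close>)
    ultimately show ?thesis unfolding weight by (rule add_nonpos_nonpos)
  qed
qed

lemma sum_list_mset_split:
  fixes f :: "'a \<Rightarrow> 'b::comm_monoid_add"
  assumes "mset xs = mset ys + mset zs"
  shows "(\<Sum>s\<leftarrow>xs. f s) = (\<Sum>s\<leftarrow>ys. f s) + (\<Sum>s\<leftarrow>zs. f s)"
proof -
  have "(\<Sum>s\<leftarrow>l. f s) = sum_mset (image_mset f (mset l))" for l :: "'a list"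
    by (metis mset_map sum_mset_sum_list)
  then show ?thesis using assms by simp
qed

lemma exists_sublist_sum_dvd:
  fixes h :: "'a \<Rightarrow> nat"
  assumes g: "0 < g" and L: "g \<le> length L"
  shows "\<exists>kept rem. mset L = mset kept + mset rem \<and> rem \<noteq> [] \<and> g dvd (\<Sum>s\<leftarrow>rem. h s)"
proof -
  define p where "p t = (\<Sum>s\<leftarrow>take t L. h s) mod g" for t
  have "p ` {0..g} \<subseteq> {..<g}" using g by (auto simp: p_def)
  then have "card (p ` {0..g}) < card {0..g}"
    by (metis card_atLeastAtMost card_lessThan card_mono finite_lessThan le_imp_less_Suc minus_nat.diff_0)
  then have "\<not> inj_on p {0..g}" by (rule pigeonhole)
  then obtain a b where ab: "a < b" "b \<le> g" "p a = p b"
    unfolding inj_on_def by (metis atLeastAtMost_iff linorder_neqE_nat)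
  define rem where "rem = drop a (take b L)"
  have take_b: "take b L = take a L @ rem"
    unfolding rem_def using ab(1) by (metis append_take_drop_id less_imp_le_nat min.absorb1 take_take)
  have "mset L = mset (take a L @ drop b L) + mset rem"
    by (metis append_take_drop_id mset_append take_b add.commute union_assoc)
  moreover have "rem \<noteq> []" unfolding rem_def using ab L by simp
  moreover have "g dvd (\<Sum>s\<leftarrow>rem. h s)"
    using ab(3) mod_eq_dvd_iff_nat[of "\<Sum>s\<leftarrow>take a L. h s" "(\<Sum>s\<leftarrow>take a L. h s) + (\<Sum>s\<leftarrow>rem. h s)" g]
    by (simp add: p_def take_b)
  ultimately show ?thesis by (intro exI[of _ "take a L @ drop b L"] exI[of _ rem]) simp
qed

lemma twice_optimal_no_removable_loops:
  assumes TO: "twice_optimal n A Z0 g W" and lam: "mcm n A = 0"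
    and W: "W = splice_loops xs v segs ys"
    and segs: "mset segs = mset kept + mset rem" and "rem \<noteq> []"
    and dvd: "g dvd (\<Sum>s\<leftarrow>rem. wlen (v # s @ [v]))"
    and meets: "set (splice_loops xs v kept ys) \<inter> set Z0 \<noteq> {}"
  shows False
proof -
  define W' where "W' = splice_loops xs v kept ys"
  have kept_sub: "set kept \<subseteq> set segs" and rem_sub: "set rem \<subseteq> set segs"
    using arg_cong[OF segs, of set_mset] by auto
  have "is_walk n A W" using TO by (simp add: twice_optimal_def)
  then have ends: "is_walk n A (xs @ [v])" "is_walk n A (v # ys)"
    and loops: "\<forall>s\<in>set segs. is_walk n A (v # s @ [v])"
    unfolding W is_walk_splice_loops_iff by auto
  have "is_walk n A W'"
    unfolding W'_def is_walk_splice_loops_iff using ends loops kept_sub by auto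
  moreover have lens: "wlen W = wlen W' + (\<Sum>s\<leftarrow>rem. wlen (v # s @ [v]))"
    unfolding W W'_def splice_loops_additive[where F = wlen, OF wlen_append]
      sum_list_mset_split[OF segs] by linarith
  then have "wlen W' mod g = wlen W mod g" using dvd by (auto elim!: dvdE)
  ultimately have comparable: "comparable_walk n A Z0 g W W'"
    using meets unfolding comparable_walk_def W W'_def by (simp add: hd_splice_loops last_splice_loops)
  have "(\<Sum>s\<leftarrow>rem. wweight A (v # s @ [v])) \<le> 0"
    using rem_sub by (auto intro!: sum_list_nonpos closed_walk_weight_nonpos[OF lam] loops[rule_format])
  moreover have "wweight A W = wweight A W' + (\<Sum>s\<leftarrow>rem. wweight A (v # s @ [v]))"
    unfolding W W'_def splice_loops_additive[where F = "wweight A", OF wweight_append]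
      sum_list_mset_split[OF segs] by (simp add: ac_simps)
  ultimately have "wweight A W \<le> wweight A W'"
    using add_mono[of "wweight A W'" "wweight A W'" _ 0] by simp
  moreover have "wweight A W' \<le> wweight A W"
    using TO comparable unfolding twice_optimal_def by blast
  ultimately have "wlen W \<le> wlen W'"
    using TO comparable unfolding twice_optimal_def by (metis order_antisym)
  moreover have "0 < (\<Sum>s\<leftarrow>rem. wlen (v # s @ [v]))"
    using \<open>rem \<noteq> []\<close> by (cases rem) (auto simp: wlen_def)
  ultimately show False using lens by linarith
qed

lemma twice_optimal_count_list_le:
  assumes TO: "twice_optimal n A Z0 g W" and lam: "mcm n A = 0" and "0 < g"
    and "v \<in> set Z0"
  shows "count_list W v \<le> g"
proof (rule ccontr)
  assume "\<not> count_list W v \<le> g"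
  then obtain xs segs ys where W: "W = splice_loops xs v segs ys" and "length segs = g"
    using splice_loops_if_count_list[of g W v] by auto
  then obtain kept rem where
    "mset segs = mset kept + mset rem" "rem \<noteq> []" "g dvd (\<Sum>s\<leftarrow>rem. wlen (v # s @ [v]))"
    using exists_sublist_sum_dvd[OF \<open>0 < g\<close>] by (metis order_refl)
  moreover have "set (splice_loops xs v kept ys) \<inter> set Z0 \<noteq> {}"
    using \<open>v \<in> set Z0\<close> by (auto simp: splice_loops_def)
  ultimately show False using twice_optimal_no_removable_loops[OF TO lam W] by blast
qed

lemma twice_optimal_count_list_le_Suc:
  assumes TO: "twice_optimal n A Z0 g W" and lam: "mcm n A = 0" and "0 < g"
  shows "count_list W v \<le> g + 1"
proof (cases "v \<in> set Z0")
  case True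
  then show ?thesis using twice_optimal_count_list_le[OF assms] by fastforce
next
  case False
  show ?thesis
  proof (rule ccontr)
    assume "\<not> count_list W v \<le> g + 1"
    then obtain xs segs ys where W: "W = splice_loops xs v segs ys" and "length segs = Suc g"
      using splice_loops_if_count_list[of "Suc g" W v] by auto
    obtain z where "z \<in> set W" "z \<in> set Z0" using TO by (auto simp: twice_optimal_def)
    \<comment> \<open>keep one loop: the one through z if there is one, so that the shortened walk still meets Z0\<close>
    obtain s where s: "s \<in> set segs" and z: "z \<in> set xs \<union> set s \<union> set ys"
    proof (cases "\<exists>s\<in>set segs. z \<in> set s")
      case False
      then have "z \<in> set xs \<union> set ys"
        using \<open>z \<in> set W\<close> \<open>z \<in> set Z0\<close> \<open>v \<notin> set Z0\<close> W by (auto simp: splice_loops_def split: if_splits)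
      moreover have "hd segs \<in> set segs" using \<open>length segs = Suc g\<close> by (cases segs) auto
      ultimately show ?thesis using that by blast
    qed (use that in blast)
    then obtain L1 L2 where segs: "segs = L1 @ s # L2" by (meson split_list)
    then have "g \<le> length (L1 @ L2)" using \<open>length segs = Suc g\<close> by simp
    then obtain kept rem where
      "mset (L1 @ L2) = mset kept + mset rem" "rem \<noteq> []" "g dvd (\<Sum>s\<leftarrow>rem. wlen (v # s @ [v]))"
      using exists_sublist_sum_dvd[OF \<open>0 < g\<close>] by metis
    moreover from this(1) have "mset segs = mset (s # kept) + mset rem" by (simp add: segs)
    moreover have "set (splice_loops xs v (s # kept) ys) \<inter> set Z0 \<noteq> {}"
      using z \<open>z \<in> set Z0\<close> by (auto simp: splice_loops_def)
    ultimately show False using twice_optimal_no_removable_loops[OF TO lam W] by blast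
  qed
qed

lemma length_interesting_walk:
  assumes "interesting n A Z0 g W" and "g \<le> n"
  shows "length W = g * g + (g + 1) * (n - g)"
proof -
  have "W \<noteq> []" using assms(1) by (simp add: interesting_def twice_optimal_def is_walk_def)
  then have "length W = Suc (wlen W)" by (simp add: wlen_def)
  then have "int (length W) = int g * int n + int n - int g"
    using assms(1) by (simp add: interesting_def DM_def algebra_simps)
  moreover have "int (g * g + (g + 1) * (n - g)) = int g * int n + int n - int g"
    using assms(2) by (simp add: of_nat_diff) (simp add: algebra_simps)
  ultimately show ?thesis by linarith
qed

lemma count_list_eq_if_le_and_sum_le:
  fixes cap :: "'a \<Rightarrow> nat"
  assumes "set xs \<subseteq> X" and "finite X" and "\<And>v. v \<in> X \<Longrightarrow> count_list xs v \<le> cap v"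
    and "sum cap X \<le> length xs" and "v \<in> X"
  shows "count_list xs v = cap v"
proof (rule sum_mono_inv[where I = X])
  have "sum (count_list xs) X \<le> sum cap X" using assms(3) by (rule sum_mono)
  then show "sum (count_list xs) X = sum cap X"
    using assms(4) sum_count_set[OF assms(1,2)] by simp
qed (use assms in auto)

theorem lemmal:
  fixes n :: nat and A :: mpmat and Z0 W :: "nat list" and g :: nat
  assumes fin: "\<forall>i j. A i j \<noteq> \<infinity>"
    and lam: "mcm n A = 0"
    and g_def: "g = g_crit n A"
    and T1: "\<exists>T. is_T1 n A T \<and> int T = DM g n"
    and Z0: "crit_graph_cycle n A Z0" "wlen Z0 = g"
    and uniq: "\<forall>c. crit_graph_cycle n A c \<and> wlen c = g \<longrightarrow>
                 (\<exists>k. butlast c = rotate k (butlast Z0))"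
    and W: "interesting n A Z0 g W"
  shows "(\<forall>v\<in>set Z0. count_list W v = g) \<and>
         (\<forall>v<n. v \<notin> set Z0 \<longrightarrow> count_list W v = g + 1)"
  \<comment> \<open>only lam, Z0 and W are needed\<close>
proof -
  have TO: "twice_optimal n A Z0 g W" using W by (simp add: interesting_def)
  have cyc: "is_cycle n A Z0" using Z0(1) by (simp add: crit_graph_cycle_def)
  then have "0 < g" and Z0_nodes: "set Z0 \<subseteq> {..<n}" and card_Z0: "card (set Z0) = g"
    using Z0(2) card_set_cycle[OF cyc] by (auto simp: is_cycle_def is_walk_def wlen_def)
  then have "g \<le> n" by (metis card_lessThan card_mono finite_lessThan)
  define cap where "cap v = (if v \<in> set Z0 then g else g + 1)" for v
  have "count_list W v \<le> cap v" for v
    using twice_optimal_count_list_le[OF TO lam \<open>0 < g\<close>]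
      twice_optimal_count_list_le_Suc[OF TO lam \<open>0 < g\<close>] by (simp add: cap_def)
  moreover have "(\<Sum>v<n. cap v) = length W"
    using Z0_nodes card_Z0 length_interesting_walk[OF W \<open>g \<le> n\<close>]
    by (simp add: cap_def sum.If_cases Int_absorb1 Diff_eq[symmetric] card_Diff_subset)
  moreover have "set W \<subseteq> {..<n}" using TO by (simp add: twice_optimal_def is_walk_def)
  ultimately have "count_list W v = cap v" if "v < n" for v
    using count_list_eq_if_le_and_sum_le[of W "{..<n}" cap v] that by simp
  then show ?thesis using Z0_nodes by (auto simp: cap_def)
qed

end
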